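(* Consider the dynamic setting: $K\ge2$, $\delta\in(0,1/K]$, $c,c_\eta>0$; $\mathbf z_t\in\Delta^{K-1}$, $|\widetilde f_t|\le c$, $\ell_t(\mathbf w)=-\widetilde f_t\mathbf w^\top\mathbf z_t$; $\widehat{\mathbf w}_1$ uniform and $\widehat{\mathbf w}_{t+1}=\arg\min_{\mathbf w\in\Delta^{K-1}}\{\eta_t\nabla\ell_t^\top\mathbf w+\mathrm{KL}(\mathbf w\|\widehat{\mathbf w}_t)\}$ with $\eta_t=\eta_0/\sqrt{1+c_\eta t}$; comparators $\mathbf w_1,\dots,\mathbf w_T$ and iterates $\widehat{\mathbf w}_1,\dots,\widehat{\mathbf w}_{T+1}$ all in $\Delta^{K-1}_\delta$. Let $V_T=\sum_{t=2}^T\|\mathbf w_t-\mathbf w_{t-1}\|_1$, $L_\delta=1+\log(1/\delta)$, $A_T:=\log(1/\delta)+L_\delta V_T$, $\eta_0=\sqrt{c_\eta A_T}/c$, and $R^{\mathrm{dyn}}_T=\sum_{t\le T}(\ell_t(\widehat{\mathbf w}_t)-\ell_t(\mathbf w_t))$. Then for any $\varepsilon>0$, $\frac1T R_T^{\mathrm{dyn}}\le\varepsilon$ holds whenever $$T\ge\frac{2}{\varepsilon^2}\left(c^2A_T+\sqrt{c^4A_T^2+\frac{\varepsilon^2c^2A_T}{c_\eta}}\right).$$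
   Context: $\Delta^{K-1}$ is the probability simplex; $\Delta^{K-1}_\delta=\{\mathbf w\in\Delta^{K-1}:w_k\ge\delta\ \forall k\}$; $\mathrm{KL}(\mathbf u\|\mathbf w)=\sum_k u_k\log(u_k/w_k)$. *)

theory Defs
  imports Complex_Main
begin

text \<open>Vectors in R^K are represented as functions nat => real, with coordinates k < K
  (coordinates k >= K are required to vanish for simplex members).\<close>

definition simplex :: "nat \<Rightarrow> (nat \<Rightarrow> real) set" where
  "simplex K = {w. (\<forall>k<K. 0 \<le> w k) \<and> (\<forall>k\<ge>K. w k = 0) \<and> (\<Sum>k<K. w k) = 1}"

definition simplex_delta :: "nat \<Rightarrow> real \<Rightarrow> (nat \<Rightarrow> real) set" where
  "simplex_delta K \<delta> = {w \<in> simplex K. \<forall>k<K. \<delta> \<le> w k}"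

text \<open>KL divergence, with the convention 0 log(0/w) = 0 (automatic since ln 0 = 0 in Isabelle).\<close>
definition KL :: "nat \<Rightarrow> (nat \<Rightarrow> real) \<Rightarrow> (nat \<Rightarrow> real) \<Rightarrow> real" where
  "KL K u w = (\<Sum>k<K. u k * ln (u k / w k))"

definition dotK :: "nat \<Rightarrow> (nat \<Rightarrow> real) \<Rightarrow> (nat \<Rightarrow> real) \<Rightarrow> real" where
  "dotK K u v = (\<Sum>k<K. u k * v k)"

definition l1dist :: "nat \<Rightarrow> (nat \<Rightarrow> real) \<Rightarrow> (nat \<Rightarrow> real) \<Rightarrow> real" where
  "l1dist K u v = (\<Sum>k<K. \<bar>u k - v k\<bar>)"

definition path_length :: "nat \<Rightarrow> (nat \<Rightarrow> nat \<Rightarrow> real) \<Rightarrow> nat \<Rightarrow> real" where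
  "path_length K w T = (\<Sum>t=2..T. l1dist K (w t) (w (t - 1)))"

definition lin_loss :: "nat \<Rightarrow> real \<Rightarrow> (nat \<Rightarrow> real) \<Rightarrow> (nat \<Rightarrow> real) \<Rightarrow> real" where
  "lin_loss K f z w = - f * dotK K w z"

end

theory Submission
  imports Defs
begin

(* Mirror descent with the KL regulariser is exponential weights: for v in the simplex the
   objective equals KL(v || p e^(-eta g) / Z) - ln Z, so Gibbs' inequality identifies the
   minimiser, and a Hoeffding-type bound on ln Z gives the one-step inequality
   eta <g, p - u> <= KL(u || p) - KL(u || q) + eta^2 c^2 / 2.  Dividing by eta_t and summing,
   the KL terms telescope against the increasing weights 1 / eta_t; on the delta-simplex KL is
   (1 + ln(1/delta))-Lipschitz in its first argument, so moving the comparator costs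
   (1 + ln(1/delta)) ||w_t - w_(t-1)||_1 and the KL part is at most A_T / eta_T.  For
   eta_t = eta_0 / sqrt(1 + c_eta t) both A_T / eta_T and (c^2/2) sum_t eta_t are at most
   c sqrt(A_T (T + 1/c_eta)), and the lower bound on T is the larger root of
   eps^2 T^2 = 4 c^2 A_T (T + 1/c_eta). *)

section \<open>Gibbs' inequality and KL divergence on the simplex\<close>

lemma diff_le_mult_ln_div:
  fixes u p :: real
  assumes "0 \<le> u" "0 < p"
  shows "u - p \<le> u * ln (u / p)"
proof (cases "u = 0")
  case False
  with assms have "0 < u" by simp
  have "u * (1 - p / u) \<le> u * ln (u / p)"
    using ln_le_minus_one[of "p / u"] \<open>0 < u\<close> assms(2) by (intro mult_left_mono) (auto simp: ln_div)
  moreover have "u * (1 - p / u) = u - p"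
    using \<open>0 < u\<close> by (simp add: field_simps)
  ultimately show ?thesis by simp
qed (use assms in simp)

lemma mult_ln_div_eq_diff_imp_eq:
  fixes u p :: real
  assumes "0 < u" "0 < p" "u * ln (u / p) = u - p"
  shows "u = p"
proof -
  have "ln (p / u) = p / u - 1"
    using assms by (simp add: ln_div field_simps)
  with assms show ?thesis
    using ln_eq_minus_one[of "p / u"] by simp
qed

lemma simplex_le_one: "w \<in> simplex K \<Longrightarrow> k < K \<Longrightarrow> w k \<le> 1"
  using member_le_sum[of k "{..<K}" w] by (auto simp: simplex_def)

lemma simplex_ex_pos:
  assumes "p \<in> simplex K"
  shows "\<exists>k<K. 0 < p k"
proof (rule ccontr)
  assume "\<not> ?thesis"
  with assms have "\<forall>k\<in>{..<K}. p k = 0"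
    by (auto simp: simplex_def not_less intro: antisym)
  with assms show False by (simp add: simplex_def)
qed

lemma simplex_delta_pos: "w \<in> simplex_delta K \<delta> \<Longrightarrow> 0 < \<delta> \<Longrightarrow> k < K \<Longrightarrow> 0 < w k"
  by (auto simp: simplex_delta_def intro: less_le_trans)

lemma KL_eq_sum_Gibbs_terms:
  assumes "u \<in> simplex K" "p \<in> simplex K"
  shows "KL K u p = (\<Sum>k<K. u k * ln (u k / p k) - (u k - p k))"
  using assms by (simp add: KL_def sum_subtractf simplex_def)

lemma KL_nonneg:
  assumes "u \<in> simplex K" "p \<in> simplex K" "\<And>k. k < K \<Longrightarrow> 0 < p k"
  shows "0 \<le> KL K u p"
  unfolding KL_eq_sum_Gibbs_terms[OF assms(1,2)]
  using assms by (intro sum_nonneg) (simp add: diff_le_mult_ln_div simplex_def)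

lemma KL_nonpos_imp_eq:
  assumes u: "u \<in> simplex K" and p: "p \<in> simplex K" "\<And>k. k < K \<Longrightarrow> 0 < p k"
    and KL: "KL K u p \<le> 0"
  shows "u = p"
proof
  fix k
  show "u k = p k"
  proof (cases "k < K")
    case True
    have terms: "0 \<le> u j * ln (u j / p j) - (u j - p j)" if "j \<in> {..<K}" for j
      using that u p by (simp add: diff_le_mult_ln_div simplex_def)
    then have "0 \<le> (\<Sum>j<K. u j * ln (u j / p j) - (u j - p j))"
      by (intro sum_nonneg) auto
    then have "(\<Sum>j<K. u j * ln (u j / p j) - (u j - p j)) = 0"
      using KL KL_eq_sum_Gibbs_terms[OF u p(1)] by linarith
    then have "u k * ln (u k / p k) = u k - p k"
      using True by (subst (asm) sum_nonneg_eq_0_iff) (use terms in auto)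
    moreover have "0 \<le> u k" "0 < p k" using True u p by (auto simp: simplex_def)
    ultimately show ?thesis
      by (cases "u k = 0") (auto intro: mult_ln_div_eq_diff_imp_eq)
  qed (use u p in \<open>simp add: simplex_def\<close>)
qed

lemma KL_le_ln_inverse:
  assumes "u \<in> simplex K" "p \<in> simplex_delta K \<delta>" "0 < \<delta>"
  shows "KL K u p \<le> ln (1 / \<delta>)"
proof -
  have "KL K u p \<le> (\<Sum>k<K. u k * ln (1 / \<delta>))"
    unfolding KL_def
  proof (intro sum_mono)
    fix k assume k: "k \<in> {..<K}"
    have "0 \<le> u k" "u k \<le> 1" "\<delta> \<le> p k"
      using assms k simplex_le_one by (auto simp: simplex_def simplex_delta_def)
    moreover have "u k / p k \<le> 1 / \<delta>" if "0 < u k"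
      using that \<open>u k \<le> 1\<close> \<open>\<delta> \<le> p k\<close> assms(3) by (simp add: frac_le)
    ultimately show "u k * ln (u k / p k) \<le> u k * ln (1 / \<delta>)"
      using assms(3) by (cases "u k = 0") (auto intro: mult_left_mono)
  qed
  also have "\<dots> = ln (1 / \<delta>)"
    using assms(1) by (simp add: sum_distrib_right[symmetric] simplex_def)
  finally show ?thesis .
qed

lemma mult_ln_div_diff_le:
  fixes a b p \<delta> :: real
  assumes "0 < \<delta>" "\<delta> \<le> a" "a \<le> 1" "\<delta> \<le> p" "p \<le> 1" "0 < b"
  shows "a * ln (a / p) - b * ln (b / p) \<le> (1 + ln (1 / \<delta>)) * \<bar>a - b\<bar>"
proof -
  have pos: "0 < a" "0 < p" using assms by auto
  have "b - a \<le> b * ln (b / a)"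
    using diff_le_mult_ln_div[of b a] pos assms(6) by simp
  moreover have "ln (b / a) = ln (b / p) - ln (a / p)"
    using pos assms(6) by (simp add: ln_div)
  ultimately have "a * ln (a / p) - b * ln (b / p) \<le> (ln (a / p) + 1) * (a - b)"
    by (simp add: algebra_simps)
  also have "\<dots> \<le> \<bar>ln (a / p) + 1\<bar> * \<bar>a - b\<bar>"
    by (metis abs_ge_self abs_mult)
  also have "\<dots> \<le> (1 + ln (1 / \<delta>)) * \<bar>a - b\<bar>"
  proof (intro mult_right_mono)
    have "\<delta> * p \<le> \<delta>" "\<delta> * a \<le> \<delta>"
      using mult_left_mono[of p 1 \<delta>] mult_left_mono[of a 1 \<delta>] assms by simp_all
    then have "\<delta> * p \<le> a" "\<delta> * a \<le> p"
      using assms by linarith+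
    then have "\<delta> \<le> a / p" "a / p \<le> 1 / \<delta>"
      using assms(1) pos by (simp_all add: field_simps)
    then have "ln \<delta> \<le> ln (a / p)" "ln (a / p) \<le> ln (1 / \<delta>)"
      using assms(1) pos by (subst ln_le_cancel_iff; simp)+
    moreover have "ln \<delta> = - ln (1 / \<delta>)"
      using assms(1) by (simp add: ln_div)
    ultimately have "\<bar>ln (a / p)\<bar> \<le> ln (1 / \<delta>)"
      by linarith
    then show "\<bar>ln (a / p) + 1\<bar> \<le> 1 + ln (1 / \<delta>)" by linarith
  qed simp
  finally show ?thesis .
qed

lemma KL_diff_le_l1dist:
  assumes "a \<in> simplex_delta K \<delta>" "b \<in> simplex_delta K \<delta>" "p \<in> simplex_delta K \<delta>" "0 < \<delta>"
  shows "KL K a p - KL K b p \<le> (1 + ln (1 / \<delta>)) * l1dist K a b"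
proof -
  have "KL K a p - KL K b p = (\<Sum>k<K. a k * ln (a k / p k) - b k * ln (b k / p k))"
    by (simp add: KL_def sum_subtractf)
  also have "\<dots> \<le> (\<Sum>k<K. (1 + ln (1 / \<delta>)) * \<bar>a k - b k\<bar>)"
  proof (intro sum_mono mult_ln_div_diff_le[OF assms(4)])
    fix k assume "k \<in> {..<K}"
    then show "\<delta> \<le> a k" "a k \<le> 1" "\<delta> \<le> p k" "p k \<le> 1" "0 < b k"
      using assms simplex_le_one[of a K k] simplex_le_one[of p K k] simplex_delta_pos[OF assms(2,4)]
      by (auto simp: simplex_delta_def)
  qed
  also have "\<dots> = (1 + ln (1 / \<delta>)) * l1dist K a b"
    by (simp add: l1dist_def sum_distrib_left)
  finally show ?thesis .
qed

section \<open>The mirror-descent step is exponential weights\<close>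

lemma exp_le_quadratic_of_nonpos:
  fixes x :: real
  assumes "x \<le> 0"
  shows "exp x \<le> 1 + x + x\<^sup>2 / 2"
proof -
  let ?f = "\<lambda>y::real. 1 + y + y\<^sup>2 / 2 - exp y"
  have "?f 0 \<le> ?f x"
  proof (rule DERIV_nonpos_imp_nonincreasing[OF assms])
    fix y :: real
    assume "x \<le> y" "y \<le> 0"
    then show "\<exists>d. DERIV ?f y :> d \<and> d \<le> 0"
      by (intro exI[of _ "1 + y - exp y"]) (auto intro!: derivative_eq_intros)
  qed
  then show ?thesis by simp
qed

lemma sum_exp_le_exp_sum_of_nonpos:
  fixes X :: "nat \<Rightarrow> real"
  assumes p: "p \<in> simplex K" and X: "\<And>k. k < K \<Longrightarrow> - m \<le> X k \<and> X k \<le> 0"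
  shows "(\<Sum>k<K. p k * exp (X k)) \<le> exp ((\<Sum>k<K. p k * X k) + m\<^sup>2 / 2)"
proof -
  have "(\<Sum>k<K. p k * exp (X k)) \<le> (\<Sum>k<K. p k * (1 + X k + m\<^sup>2 / 2))"
  proof (intro sum_mono mult_left_mono)
    fix k assume "k \<in> {..<K}"
    then have "- m \<le> X k" "X k \<le> 0" using X by auto
    then have "(X k)\<^sup>2 \<le> m\<^sup>2"
      using power_mono[of "- X k" m 2] by simp
    then show "exp (X k) \<le> 1 + X k + m\<^sup>2 / 2"
      using exp_le_quadratic_of_nonpos[OF \<open>X k \<le> 0\<close>] by linarith
    show "0 \<le> p k" using p \<open>k \<in> {..<K}\<close> by (simp add: simplex_def)
  qed
  also have "\<dots> = (\<Sum>k<K. p k) + (\<Sum>k<K. p k * X k) + (\<Sum>k<K. p k) * (m\<^sup>2 / 2)"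
    by (simp only: distrib_left sum.distrib sum_distrib_right mult_1_right)
  also have "\<dots> = 1 + ((\<Sum>k<K. p k * X k) + m\<^sup>2 / 2)"
    using p by (simp add: simplex_def)
  also have "\<dots> \<le> exp ((\<Sum>k<K. p k * X k) + m\<^sup>2 / 2)"
    by (rule exp_ge_add_one_self)
  finally show ?thesis .
qed

definition exp_partition :: "nat \<Rightarrow> real \<Rightarrow> (nat \<Rightarrow> real) \<Rightarrow> (nat \<Rightarrow> real) \<Rightarrow> real" where
  "exp_partition K \<eta> g p = (\<Sum>k<K. p k * exp (- \<eta> * g k))"

definition exp_weights :: "nat \<Rightarrow> real \<Rightarrow> (nat \<Rightarrow> real) \<Rightarrow> (nat \<Rightarrow> real) \<Rightarrow> nat \<Rightarrow> real" where
  "exp_weights K \<eta> g p k =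
     (if k < K then p k * exp (- \<eta> * g k) / exp_partition K \<eta> g p else 0)"

lemma exp_partition_pos:
  assumes "p \<in> simplex K"
  shows "0 < exp_partition K \<eta> g p"
proof -
  obtain k where "k < K" "0 < p k" using simplex_ex_pos[OF assms] by blast
  with assms show ?thesis
    unfolding exp_partition_def by (intro sum_pos2[of _ k]) (auto simp: simplex_def)
qed

lemma ln_exp_partition_le:
  assumes p: "p \<in> simplex K" and g: "\<And>k. k < K \<Longrightarrow> a \<le> g k \<and> g k \<le> a + c"
    and "0 \<le> \<eta>"
  shows "ln (exp_partition K \<eta> g p) \<le> - \<eta> * dotK K g p + \<eta>\<^sup>2 * c\<^sup>2 / 2"
proof -
  define X where "X k = - \<eta> * (g k - a)" for k
  have "- (\<eta> * c) \<le> X k \<and> X k \<le> 0" if "k < K" for k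
    using g[OF that] \<open>0 \<le> \<eta>\<close> by (auto simp: X_def intro: mult_left_mono)
  then have bound: "(\<Sum>k<K. p k * exp (X k)) \<le> exp ((\<Sum>k<K. p k * X k) + (\<eta> * c)\<^sup>2 / 2)"
    by (rule sum_exp_le_exp_sum_of_nonpos[OF p]) have "(\<Sum>k<K. p k * X k) = (\<Sum>k<K. \<eta> * a * p k - \<eta> * (g k * p k))"
    by (simp add: X_def algebra_simps)
  then have sum_X: "(\<Sum>k<K. p k * X k) = - \<eta> * dotK K g p + \<eta> * a"
    using p by (simp add: dotK_def sum_subtractf flip: sum_distrib_left add: simplex_def)
  have "exp_partition K \<eta> g p = exp (- \<eta> * a) * (\<Sum>k<K. p k * exp (X k))"
    by (simp add: exp_partition_def X_def sum_distrib_left algebra_simps flip: exp_add)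
  also have "\<dots> \<le> exp (- \<eta> * a) * exp ((\<Sum>k<K. p k * X k) + (\<eta> * c)\<^sup>2 / 2)"
    using bound by simp
  also have "\<dots> = exp (- \<eta> * dotK K g p + \<eta>\<^sup>2 * c\<^sup>2 / 2)"
    by (simp add: sum_X power_mult_distrib flip: exp_add)
  finally have "exp_partition K \<eta> g p \<le> exp (- \<eta> * dotK K g p + \<eta>\<^sup>2 * c\<^sup>2 / 2)" .
  then have "ln (exp_partition K \<eta> g p) \<le> ln (exp (- \<eta> * dotK K g p + \<eta>\<^sup>2 * c\<^sup>2 / 2))"
    using exp_partition_pos[OF p] by (subst ln_le_cancel_iff) auto
  then show ?thesis by simp
qed

lemma exp_weights_in_simplex:
  assumes "p \<in> simplex K"
  shows "exp_weights K \<eta> g p \<in> simplex K"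
proof -
  have "(\<Sum>k<K. exp_weights K \<eta> g p k) = 1"
    using exp_partition_pos[OF assms, of \<eta> g]
    by (simp add: exp_weights_def sum_divide_distrib[symmetric] exp_partition_def)
  with assms exp_partition_pos[OF assms, of \<eta> g] show ?thesis
    by (auto simp: simplex_def exp_weights_def)
qed

lemma exp_weights_pos:
  assumes "p \<in> simplex K" "k < K" "0 < p k"
  shows "0 < exp_weights K \<eta> g p k"
  using assms exp_partition_pos[OF assms(1)] by (simp add: exp_weights_def)

lemma ln_exp_weights_div:
  assumes "p \<in> simplex K" "k < K" "0 < p k"
  shows "ln (exp_weights K \<eta> g p k / p k) = - \<eta> * g k - ln (exp_partition K \<eta> g p)"
  using assms exp_partition_pos[OF assms(1), of \<eta> g] by (simp add: exp_weights_def ln_div)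

lemma mirror_objective_eq_KL_exp_weights:
  assumes p: "p \<in> simplex K" "\<And>k. k < K \<Longrightarrow> 0 < p k" and v: "v \<in> simplex K"
  shows "\<eta> * dotK K g v + KL K v p = KL K v (exp_weights K \<eta> g p) - ln (exp_partition K \<eta> g p)"
proof -
  let ?r = "exp_weights K \<eta> g p" and ?Z = "exp_partition K \<eta> g p"
  have "\<eta> * dotK K g v + KL K v p = (\<Sum>k<K. v k * ln (v k / ?r k) - v k * ln ?Z)"
    unfolding dotK_def KL_def sum_distrib_left sum.distrib[symmetric]
  proof (intro sum.cong refl)
    fix k assume k: "k \<in> {..<K}"
    show "\<eta> * (g k * v k) + v k * ln (v k / p k) = v k * ln (v k / ?r k) - v k * ln ?Z"
    proof (cases "v k = 0")
      case False
      with v k have "0 < v k" by (auto simp: simplex_def order_le_less)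
      moreover have "0 < p k" "0 < ?r k" using p k exp_weights_pos[OF p(1)] by auto
      ultimately have "ln (v k / p k) = ln (v k / ?r k) + ln (?r k / p k)"
        by (simp add: ln_div)
      also have "\<dots> = ln (v k / ?r k) - \<eta> * g k - ln ?Z"
        using ln_exp_weights_div[OF p(1)] k \<open>0 < p k\<close> by simp
      finally have "ln (v k / p k) = ln (v k / ?r k) - \<eta> * g k - ln ?Z" .
      then show ?thesis
        by (simp only:) (simp add: algebra_simps)
    qed simp
  qed
  also have "\<dots> = KL K v ?r - ln ?Z"
    using v by (simp add: KL_def sum_subtractf simplex_def flip: sum_distrib_right)
  finally show ?thesis .
qed

lemma argmin_eq_exp_weights:
  assumes p: "p \<in> simplex K" "\<And>k. k < K \<Longrightarrow> 0 < p k"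
    and q: "is_arg_min (\<lambda>v. \<eta> * dotK K g v + KL K v p) (\<lambda>v. v \<in> simplex K) q"
  shows "q = exp_weights K \<eta> g p"
proof -
  let ?r = "exp_weights K \<eta> g p"
  have r: "?r \<in> simplex K" "\<And>k. k < K \<Longrightarrow> 0 < ?r k"
    using exp_weights_in_simplex[OF p(1)] exp_weights_pos[OF p(1)] p(2) by auto
  have "q \<in> simplex K" using q by (simp add: is_arg_min_def)
  have "\<eta> * dotK K g q + KL K q p \<le> \<eta> * dotK K g ?r + KL K ?r p"
    using q r(1) by (auto simp: is_arg_min_def not_less)
  moreover have "KL K ?r ?r = 0" by (auto simp: KL_def intro!: sum.neutral)
  ultimately have "KL K q ?r \<le> 0"
    using mirror_objective_eq_KL_exp_weights[OF p] \<open>q \<in> simplex K\<close> r(1) by simp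
  then show ?thesis
    using KL_nonpos_imp_eq[OF \<open>q \<in> simplex K\<close> r] by simp
qed

lemma mirror_descent_step:
  assumes p: "p \<in> simplex K" "\<And>k. k < K \<Longrightarrow> 0 < p k" and u: "u \<in> simplex K"
    and g: "\<And>k. k < K \<Longrightarrow> a \<le> g k \<and> g k \<le> a + c" and "0 \<le> \<eta>"
    and q: "is_arg_min (\<lambda>v. \<eta> * dotK K g v + KL K v p) (\<lambda>v. v \<in> simplex K) q"
  shows "\<eta> * (dotK K g p - dotK K g u) \<le> KL K u p - KL K u q + \<eta>\<^sup>2 * c\<^sup>2 / 2"
proof -
  have "\<eta> * dotK K g u + KL K u p = KL K u q - ln (exp_partition K \<eta> g p)"
    using mirror_objective_eq_KL_exp_weights[OF p u] argmin_eq_exp_weights[OF p q] by simp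
  moreover have "ln (exp_partition K \<eta> g p) \<le> - \<eta> * dotK K g p + \<eta>\<^sup>2 * c\<^sup>2 / 2"
    using p(1) g \<open>0 \<le> \<eta>\<close> by (rule ln_exp_partition_le)
  ultimately show ?thesis
    unfolding right_diff_distrib by linarith
qed

section \<open>Dynamic regret of mirror descent\<close>

lemma lin_loss_eq_dotK: "lin_loss K f z v = dotK K (\<lambda>k. - f * z k) v"
  by (simp add: lin_loss_def dotK_def sum_distrib_left algebra_simps)

lemma mult_unit_interval_bounds:
  fixes x y c :: real
  assumes "0 \<le> x" "x \<le> 1" "\<bar>y\<bar> \<le> c"
  shows "min 0 y \<le> y * x \<and> y * x \<le> min 0 y + c"
proof (cases "0 \<le> y")
  case True
  then show ?thesis using assms mult_left_le[of x y] by simp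
next
  case False
  then show ?thesis
    using assms mult_left_mono_neg[of x 1 y] mult_nonpos_nonneg[of y x] by simp
qed

lemma linear_regret_round_le:
  assumes z: "z \<in> simplex K" and f: "\<bar>f\<bar> \<le> c" and "0 < \<eta>"
    and p: "p \<in> simplex K" "\<And>k. k < K \<Longrightarrow> 0 < p k" and u: "u \<in> simplex K"
    and q: "is_arg_min (\<lambda>v. \<eta> * dotK K (\<lambda>k. - f * z k) v + KL K v p) (\<lambda>v. v \<in> simplex K) q"
  shows "lin_loss K f z p - lin_loss K f z u \<le> (KL K u p - KL K u q) / \<eta> + c\<^sup>2 / 2 * \<eta>"
proof -
  have "min 0 (- f) \<le> - f * z k \<and> - f * z k \<le> min 0 (- f) + c" if "k < K" for k
    using that z f simplex_le_one[OF z that] by (intro mult_unit_interval_bounds) (auto simp: simplex_def)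
  from mirror_descent_step[OF p u this less_imp_le[OF \<open>0 < \<eta>\<close>] q]
  have "\<eta> * (lin_loss K f z p - lin_loss K f z u) \<le> KL K u p - KL K u q + \<eta>\<^sup>2 * c\<^sup>2 / 2"
    by (simp add: lin_loss_eq_dotK)
  with \<open>0 < \<eta>\<close> show ?thesis
    by (simp add: field_simps power2_eq_square)
qed

lemma weighted_telescoping_le:
  fixes D E d s :: "nat \<Rightarrow> real"
  assumes "1 \<le> n"
    and "D 1 \<le> B"
    and "\<And>t. 1 \<le> t \<Longrightarrow> t < n \<Longrightarrow> E t \<le> B"
    and "\<And>t. 2 \<le> t \<Longrightarrow> t \<le> n \<Longrightarrow> D t \<le> E (t - 1) + L * d t"
    and "0 \<le> L" and "\<And>t. 0 \<le> d t"
    and "\<And>t. 1 \<le> t \<Longrightarrow> t \<le> n \<Longrightarrow> 0 \<le> s t"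
    and "\<And>t. 1 \<le> t \<Longrightarrow> t < n \<Longrightarrow> s t \<le> s (Suc t)"
  shows "(\<Sum>t=1..n. (D t - E t) * s t) \<le> (B + L * (\<Sum>t=2..n. d t)) * s n - E n * s n"
  using assms
proof (induction n)
  case (Suc n)
  show ?case
  proof (cases "n = 0")
    case True
    then show ?thesis
      using Suc.prems mult_right_mono[of "D 1" B "s 1"] by (simp add: algebra_simps)
  next
    case False
    let ?P = "\<Sum>t=2..n. d t"
    have IH: "(\<Sum>t=1..n. (D t - E t) * s t) \<le> (B + L * ?P) * s n - E n * s n"
      using Suc False by simp
    have "D (Suc n) \<le> E n + L * d (Suc n)"
      using Suc.prems(4)[of "Suc n"] False by simp
    then have "D (Suc n) * s (Suc n) \<le> (E n + L * d (Suc n)) * s (Suc n)"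
      using Suc.prems(7)[of "Suc n"] by (intro mult_right_mono) auto
    moreover have "(B - E n) * s n \<le> (B - E n) * s (Suc n)"
      using Suc.prems(3,8)[of n] False by (intro mult_left_mono) auto
    moreover have "(L * ?P) * s n \<le> (L * ?P) * s (Suc n)"
      using Suc.prems(5,6) Suc.prems(8)[of n] False by (intro mult_left_mono mult_nonneg_nonneg sum_nonneg) auto
    moreover have "(\<Sum>t=2..Suc n. d t) = ?P + d (Suc n)"
      using False by (simp add: sum.cl_ivl_Suc)
    ultimately show ?thesis
      using IH by (simp add: sum.cl_ivl_Suc algebra_simps)
  qed
qed simp

lemma sum_KL_drift_div_le:
  fixes K T :: nat and \<delta> :: real and \<eta> :: "nat \<Rightarrow> real" and w what :: "nat \<Rightarrow> nat \<Rightarrow> real"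
  assumes \<delta>: "0 < \<delta>" "\<delta> \<le> 1" and "1 \<le> T"
    and \<eta>: "\<And>t. t \<in> {1..T} \<Longrightarrow> 0 < \<eta> t" "\<And>t. t \<in> {1..<T} \<Longrightarrow> \<eta> (Suc t) \<le> \<eta> t"
    and w: "\<And>t. t \<in> {1..T} \<Longrightarrow> w t \<in> simplex_delta K \<delta>"
    and what: "\<And>t. t \<in> {1..T+1} \<Longrightarrow> what t \<in> simplex_delta K \<delta>"
  shows "(\<Sum>t=1..T. (KL K (w t) (what t) - KL K (w t) (what (Suc t))) / \<eta> t)
    \<le> (ln (1 / \<delta>) + (1 + ln (1 / \<delta>)) * path_length K w T) / \<eta> T"
proof -
  define D where "D t = KL K (w t) (what t)" for t
  define E where "E t = KL K (w t) (what (Suc t))" for t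
  have w_simplex: "w t \<in> simplex K" if "t \<in> {1..T}" for t
    using w[OF that] by (simp add: simplex_delta_def)
  have "(\<Sum>t=1..T. (D t - E t) * (1 / \<eta> t))
      \<le> (ln (1 / \<delta>) + (1 + ln (1 / \<delta>)) * path_length K w T) * (1 / \<eta> T) - E T * (1 / \<eta> T)"
    unfolding path_length_def
  proof (rule weighted_telescoping_le[OF \<open>1 \<le> T\<close>])
    show "D 1 \<le> ln (1 / \<delta>)"
      using KL_le_ln_inverse[OF w_simplex what \<delta>(1)] \<open>1 \<le> T\<close> by (simp add: D_def)
    show "E t \<le> ln (1 / \<delta>)" if "1 \<le> t" "t < T" for t
      using KL_le_ln_inverse[OF w_simplex what \<delta>(1)] that by (simp add: E_def)
    show "D t \<le> E (t - 1) + (1 + ln (1 / \<delta>)) * l1dist K (w t) (w (t - 1))" if "2 \<le> t" "t \<le> T" for t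
    proof -
      have "t \<in> {1..T}" "t - 1 \<in> {1..T}" "t \<in> {1..T+1}" using that by auto
      from KL_diff_le_l1dist[OF w[OF this(1)] w[OF this(2)] what[OF this(3)] \<delta>(1)] that
      show ?thesis by (simp add: D_def E_def)
    qed
    show "0 \<le> 1 + ln (1 / \<delta>)"
      using \<delta> by simp
    show "0 \<le> l1dist K (w t) (w (t - 1))" for t
      by (simp add: l1dist_def sum_nonneg)
    show "0 \<le> 1 / \<eta> t" if "1 \<le> t" "t \<le> T" for t
      using \<eta>(1)[of t] that by simp
    show "1 / \<eta> t \<le> 1 / \<eta> (Suc t)" if "1 \<le> t" "t < T" for t
      using \<eta>(1)[of "Suc t"] \<eta>(2)[of t] that by (simp add: frac_le)
  qed
  moreover have "0 \<le> E T * (1 / \<eta> T)"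
    using KL_nonneg[OF w_simplex, of T "what (Suc T)"] what[of "Suc T"] simplex_delta_pos[OF _ \<delta>(1)]
      \<eta>(1)[of T] \<open>1 \<le> T\<close>
    by (simp add: E_def simplex_delta_def)
  ultimately show ?thesis
    by (simp add: D_def E_def)
qed

lemma dynamic_regret_le:
  fixes K T :: nat and \<delta> c :: real and f \<eta> :: "nat \<Rightarrow> real" and z w what :: "nat \<Rightarrow> nat \<Rightarrow> real"
  assumes \<delta>: "0 < \<delta>" "\<delta> \<le> 1" and "1 \<le> T"
    and z: "\<And>t. t \<in> {1..T} \<Longrightarrow> z t \<in> simplex K"
    and f: "\<And>t. t \<in> {1..T} \<Longrightarrow> \<bar>f t\<bar> \<le> c"
    and \<eta>: "\<And>t. t \<in> {1..T} \<Longrightarrow> 0 < \<eta> t" "\<And>t. t \<in> {1..<T} \<Longrightarrow> \<eta> (Suc t) \<le> \<eta> t"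
    and step: "\<And>t. t \<in> {1..T} \<Longrightarrow> is_arg_min
                 (\<lambda>v. \<eta> t * dotK K (\<lambda>k. - f t * z t k) v + KL K v (what t))
                 (\<lambda>v. v \<in> simplex K) (what (Suc t))"
    and w: "\<And>t. t \<in> {1..T} \<Longrightarrow> w t \<in> simplex_delta K \<delta>"
    and what: "\<And>t. t \<in> {1..T+1} \<Longrightarrow> what t \<in> simplex_delta K \<delta>"
  shows "(\<Sum>t=1..T. lin_loss K (f t) (z t) (what t) - lin_loss K (f t) (z t) (w t))
    \<le> (ln (1 / \<delta>) + (1 + ln (1 / \<delta>)) * path_length K w T) / \<eta> T + c\<^sup>2 / 2 * (\<Sum>t=1..T. \<eta> t)"
proof -
  have "lin_loss K (f t) (z t) (what t) - lin_loss K (f t) (z t) (w t)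
      \<le> (KL K (w t) (what t) - KL K (w t) (what (Suc t))) / \<eta> t + c\<^sup>2 / 2 * \<eta> t"
    if t: "t \<in> {1..T}" for t
  proof (rule linear_regret_round_le[OF z[OF t] f[OF t] \<eta>(1)[OF t] _ _ _ step[OF t]])
    have "what t \<in> simplex_delta K \<delta>" using what t by simp
    then show "what t \<in> simplex K" "\<And>k. k < K \<Longrightarrow> 0 < what t k"
      using simplex_delta_pos[OF _ \<delta>(1)] by (auto simp: simplex_delta_def)
    show "w t \<in> simplex K" using w[OF t] by (simp add: simplex_delta_def)
  qed
  then have "(\<Sum>t=1..T. lin_loss K (f t) (z t) (what t) - lin_loss K (f t) (z t) (w t))
      \<le> (\<Sum>t=1..T. (KL K (w t) (what t) - KL K (w t) (what (Suc t))) / \<eta> t + c\<^sup>2 / 2 * \<eta> t)"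
    by (rule sum_mono)
  also have "\<dots> = (\<Sum>t=1..T. (KL K (w t) (what t) - KL K (w t) (what (Suc t))) / \<eta> t)
        + c\<^sup>2 / 2 * (\<Sum>t=1..T. \<eta> t)"
    by (simp add: sum.distrib sum_distrib_left)
  also have "\<dots> \<le> (ln (1 / \<delta>) + (1 + ln (1 / \<delta>)) * path_length K w T) / \<eta> T
        + c\<^sup>2 / 2 * (\<Sum>t=1..T. \<eta> t)"
    using sum_KL_drift_div_le[where \<eta> = \<eta> and w = w and what = what and K = K, OF \<delta> \<open>1 \<le> T\<close> \<eta> w what]
    by simp
  finally show ?thesis .
qed

section \<open>The square-root step-size schedule\<close>

lemma sum_inverse_sqrt_affine_le:
  fixes c :: real
  assumes "0 < c"
  shows "(\<Sum>t=1..n. 1 / sqrt (1 + c * real t)) \<le> 2 / c * (sqrt (1 + c * real n) - 1)"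
proof (induction n)
  case (Suc n)
  define a where "a = sqrt (1 + c * real n)"
  define b where "b = sqrt (1 + c * real (Suc n))"
  have "1 \<le> a" "a \<le> b" "b\<^sup>2 - a\<^sup>2 = c"
    using assms by (simp_all add: a_def b_def algebra_simps)
  moreover have "0 \<le> (b - a)\<^sup>2" by simp
  ultimately have "1 / b \<le> 2 / c * (b - a)"
    using assms by (simp add: field_simps power2_eq_square)
  with Suc.IH have "(\<Sum>t=1..Suc n. 1 / sqrt (1 + c * real t)) \<le> 2 / c * (a - 1) + 2 / c * (b - a)"
    by (simp add: a_def b_def del: of_nat_Suc)
  then show ?case
    by (simp add: b_def right_diff_distrib)
qed simp

lemma sqrt_schedule_regret_bound:
  fixes A c c\<eta> \<eta>0 :: real and \<eta> :: "nat \<Rightarrow> real"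
  assumes "0 < c" "0 < c\<eta>" "0 < A"
    and \<eta>0: "\<eta>0 = sqrt (c\<eta> * A) / c" and \<eta>: "\<And>t. \<eta> t = \<eta>0 / sqrt (1 + c\<eta> * real t)"
  shows "A / \<eta> T + c\<^sup>2 / 2 * (\<Sum>t=1..T. \<eta> t) \<le> 2 * c * sqrt (A / c\<eta>) * sqrt (1 + c\<eta> * real T)"
proof -
  define S where "S = sqrt (A / c\<eta>)"
  define Q where "Q = sqrt (1 + c\<eta> * real T)"
  have "0 < S" "0 < Q" "A = c\<eta> * S\<^sup>2"
    using assms by (simp_all add: S_def Q_def add_pos_nonneg)
  moreover have "sqrt (c\<eta> * A) = sqrt (c\<eta>\<^sup>2) * S"
    unfolding S_def real_sqrt_mult[symmetric] using assms by (simp add: power2_eq_square)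
  then have "sqrt (c\<eta> * A) = c\<eta> * S"
    using assms by simp
  ultimately have \<eta>0_eq: "\<eta>0 = c\<eta> * S / c" and first: "A / \<eta> T = c * S * Q"
    using assms by (simp_all add: \<eta> Q_def power2_eq_square)
  have "(\<Sum>t=1..T. \<eta> t) = \<eta>0 * (\<Sum>t=1..T. 1 / sqrt (1 + c\<eta> * real t))"
    by (simp add: \<eta> sum_distrib_left)
  also have "\<dots> \<le> \<eta>0 * (2 / c\<eta> * (Q - 1))"
    using sum_inverse_sqrt_affine_le[OF \<open>0 < c\<eta>\<close>, of T] \<open>0 < S\<close> \<eta>0_eq assms(1,2)
    by (intro mult_left_mono) (simp_all add: Q_def)
  finally have "c\<^sup>2 / 2 * (\<Sum>t=1..T. \<eta> t) \<le> c\<^sup>2 / 2 * (\<eta>0 * (2 / c\<eta> * (Q - 1)))"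
    by (rule mult_left_mono) simp
  also have "\<dots> = c * S * Q - c * S"
    unfolding \<eta>0_eq using assms(1,2) by (simp add: power2_eq_square field_simps)
  finally have "A / \<eta> T + c\<^sup>2 / 2 * (\<Sum>t=1..T. \<eta> t) \<le> 2 * (c * S * Q) - c * S"
    using first by linarith
  also have "\<dots> \<le> 2 * c * S * Q"
    using \<open>0 < c\<close> \<open>0 < S\<close> by simp
  finally show ?thesis
    by (simp add: S_def Q_def)
qed

lemma quadratic_le_of_ge_root:
  fixes b g e x :: real
  assumes "0 < e" "0 \<le> g" "2 / e\<^sup>2 * (b + sqrt (b\<^sup>2 + e\<^sup>2 * g)) \<le> x"
  shows "4 * b * x + 4 * g \<le> (e * x)\<^sup>2"
proof -
  define W where "W = sqrt (b\<^sup>2 + e\<^sup>2 * g)"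
  have W: "0 \<le> W" "W\<^sup>2 = b\<^sup>2 + e\<^sup>2 * g"
    using assms by (simp_all add: W_def)
  have "2 * W \<le> e\<^sup>2 * x - 2 * b"
    using assms by (simp add: W_def field_simps)
  then have "(2 * W)\<^sup>2 \<le> (e\<^sup>2 * x - 2 * b)\<^sup>2"
    using W by (intro power_mono) auto
  then have "e\<^sup>2 * (4 * b * x + 4 * g) \<le> e\<^sup>2 * (e * x)\<^sup>2"
    using W by (simp add: power2_eq_square algebra_simps)
  with assms show ?thesis by simp
qed

lemma sqrt_schedule_bound_le_of_ge:
  fixes A c c\<eta> \<epsilon> :: real and T :: nat
  assumes "0 < c" "0 < c\<eta>" "0 < A" "0 < \<epsilon>"
    and T: "2 / \<epsilon>\<^sup>2 * (c\<^sup>2 * A + sqrt (c ^ 4 * A\<^sup>2 + \<epsilon>\<^sup>2 * c\<^sup>2 * A / c\<eta>)) \<le> real T"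
  shows "2 * c * sqrt (A / c\<eta>) * sqrt (1 + c\<eta> * real T) \<le> \<epsilon> * real T"
proof (rule power2_le_imp_le)
  have "(2 * c * sqrt (A / c\<eta>) * sqrt (1 + c\<eta> * real T))\<^sup>2
      = 4 * (c\<^sup>2 * A) * real T + 4 * (c\<^sup>2 * A / c\<eta>)"
    using assms(2,3) by (simp add: power_mult_distrib field_simps)
  also have "\<dots> \<le> (\<epsilon> * real T)\<^sup>2"
  proof (rule quadratic_le_of_ge_root)
    show "2 / \<epsilon>\<^sup>2 * (c\<^sup>2 * A + sqrt ((c\<^sup>2 * A)\<^sup>2 + \<epsilon>\<^sup>2 * (c\<^sup>2 * A / c\<eta>))) \<le> real T"
      using T by (simp add: power_mult_distrib mult.assoc flip: power_mult)
  qed (use assms in simp_all)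
  finally show "(2 * c * sqrt (A / c\<eta>) * sqrt (1 + c\<eta> * real T))\<^sup>2 \<le> (\<epsilon> * real T)\<^sup>2" .
qed (use assms in simp)

theorem corollaryB3:
  fixes K T :: nat and \<delta> c c\<eta> \<epsilon> \<eta>0 A :: real
    and f :: "nat \<Rightarrow> real" and z w what :: "nat \<Rightarrow> nat \<Rightarrow> real" and \<eta> :: "nat \<Rightarrow> real"
  assumes K: "K \<ge> 2"
    and delta: "0 < \<delta>" "\<delta> \<le> 1 / real K"
    and c: "c > 0" and ceta: "c\<eta> > 0"
    and z: "\<forall>t\<in>{1..T}. z t \<in> simplex K"
    and f: "\<forall>t\<in>{1..T}. \<bar>f t\<bar> \<le> c"
    and A_def: "A = ln (1 / \<delta>) + (1 + ln (1 / \<delta>)) * path_length K w T"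
    and eta0_def: "\<eta>0 = sqrt (c\<eta> * A) / c"
    and eta_def: "\<forall>t. \<eta> t = \<eta>0 / sqrt (1 + c\<eta> * real t)"
    and init: "what 1 = (\<lambda>k. if k < K then 1 / real K else 0)"
    and step: "\<forall>t\<in>{1..T}. is_arg_min
                 (\<lambda>v. \<eta> t * dotK K (\<lambda>k. - f t * z t k) v + KL K v (what t))
                 (\<lambda>v. v \<in> simplex K) (what (Suc t))"
    and comp: "\<forall>t\<in>{1..T}. w t \<in> simplex_delta K \<delta>"
    and iter: "\<forall>t\<in>{1..T+1}. what t \<in> simplex_delta K \<delta>"
    and eps: "\<epsilon> > 0"
    and Tbig: "real T \<ge> 2 / \<epsilon>\<^sup>2 * (c\<^sup>2 * A + sqrt (c ^ 4 * A\<^sup>2 + \<epsilon>\<^sup>2 * c\<^sup>2 * A / c\<eta>))"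
  shows "(1 / real T) * (\<Sum>t=1..T. lin_loss K (f t) (z t) (what t) - lin_loss K (f t) (z t) (w t)) \<le> \<epsilon>"
proof -
  have "1 / real K < 1"
    using K by simp
  with delta have "\<delta> < 1"
    by linarith
  then have "0 < A"
    using delta(1) A_def by (simp add: path_length_def l1dist_def sum_nonneg add_pos_nonneg)
  have \<eta>: "\<And>t. \<eta> t > 0" "\<And>t. \<eta> (Suc t) \<le> \<eta> t"
    using \<open>0 < A\<close> c ceta by (simp_all add: eta0_def eta_def frac_le add_pos_nonneg)
  have bound: "2 * c * sqrt (A / c\<eta>) * sqrt (1 + c\<eta> * real T) \<le> \<epsilon> * real T"
    using c ceta \<open>0 < A\<close> eps Tbig by (rule sqrt_schedule_bound_le_of_ge)
  moreover have "0 < 2 * c * sqrt (A / c\<eta>) * sqrt (1 + c\<eta> * real T)"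
    using c ceta \<open>0 < A\<close> by (simp add: add_pos_nonneg)
  ultimately have "0 < \<epsilon> * real T"
    by linarith
  with eps have "0 < T"
    by (simp add: zero_less_mult_iff)
  have "(\<Sum>t=1..T. lin_loss K (f t) (z t) (what t) - lin_loss K (f t) (z t) (w t))
      \<le> A / \<eta> T + c\<^sup>2 / 2 * (\<Sum>t=1..T. \<eta> t)"
    unfolding A_def
    by (rule dynamic_regret_le[OF delta(1) less_imp_le[OF \<open>\<delta> < 1\<close>]])
      (use \<open>0 < T\<close> z f \<eta> step comp iter in auto)
  also have "\<dots> \<le> 2 * c * sqrt (A / c\<eta>) * sqrt (1 + c\<eta> * real T)"
    using eta_def by (intro sqrt_schedule_regret_bound[OF c ceta \<open>0 < A\<close> eta0_def]) simp
  finally show ?thesis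
    using bound \<open>0 < T\<close> by (simp add: field_simps)
qed

end
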